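(* Let $E$ be a finite-dimensional real vector space ordered by a closed proper cone $C$, fix a norm $\|\cdot\|$ on $E$, let $0<T\leq\infty$, and let $U\subset E$ be a nonempty convex open set. Let $f\colon[0,T)\times U\to E$ be a continuous map such that $f(t,\cdot)$ is convex on $U$ for every $t\in[0,T)$. Then $f$ is locally Lipschitz, i.e. for every compact $K\subset U$ and every $t\in[0,T)$, $$L_{t,K}(f)=\sup_{0\leq\tau\leq t,\;x_1,x_2\in K,\;x_1\neq x_2}\frac{\|f(\tau,x_2)-f(\tau,x_1)\|}{\|x_2-x_1\|}<\infty.$$
   Context: A cone $C$ ($\lambda C\subset C$ for $\lambda>0$) is proper if $C+C\subset C$ and $C\cap(-C)=\{0\}$; it induces the partial order $x\leq y$ iff $y-x\in C$. A map $g\colon D\to E$ is convex if $D$ is convex and $g(\lambda x+(1-\lambda)y)\leq\lambda g(x)+(1-\lambda)g(y)$ (in the order induced by $C$) for all $x,y\in D$, $\lambda\in[0,1]$. *)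

theory Defs
  imports "HOL-Analysis.Analysis"
begin

definition pos_cone :: "'a::real_vector set \<Rightarrow> bool" where
  "pos_cone C \<longleftrightarrow> (\<forall>c::real. \<forall>x\<in>C. c > 0 \<longrightarrow> c *\<^sub>R x \<in> C)"

definition proper_cone :: "'a::real_vector set \<Rightarrow> bool" where
  "proper_cone C \<longleftrightarrow> pos_cone C \<and> (\<forall>x\<in>C. \<forall>y\<in>C. x + y \<in> C)
      \<and> C \<inter> uminus ` C = {0}"

definition cone_le :: "'a::real_vector set \<Rightarrow> 'a \<Rightarrow> 'a \<Rightarrow> bool" where
  "cone_le C x y \<longleftrightarrow> y - x \<in> C"

definition cone_convex_on :: "'e::real_vector set \<Rightarrow> 'd::real_vector set \<Rightarrow> ('d \<Rightarrow> 'e) \<Rightarrow> bool" where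
  "cone_convex_on C D g \<longleftrightarrow> convex D \<and>
     (\<forall>x\<in>D. \<forall>y\<in>D. \<forall>c::real. 0 \<le> c \<and> c \<le> 1 \<longrightarrow>
        cone_le C (g (c *\<^sub>R x + (1 - c) *\<^sub>R y)) (c *\<^sub>R g x + (1 - c) *\<^sub>R g y))"

end

theory Submission
  imports Defs
begin

text \<open>
  A closed proper cone \<open>C\<close> in a finite-dimensional space is normal: there is
  \<open>m > 0\<close> with \<open>m \<parallel>c\<parallel> \<le> \<parallel>c + d\<parallel>\<close> for all \<open>c, d \<in> C\<close>.  If \<open>g\<close> is \<open>C\<close>-convex, then for
  \<open>x\<^sub>1 \<noteq> x\<^sub>2\<close> the chord inequalities on the line through \<open>x\<^sub>1, x\<^sub>2\<close>, extended by \<open>\<delta>\<close> on both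
  sides, trap \<open>g x\<^sub>2 - g x\<^sub>1\<close> between two elements of the order interval whose size is
  controlled by a bound \<open>M\<close> of \<open>\<parallel>g\<parallel>\<close> near \<open>x\<^sub>1, x\<^sub>2\<close>; normality turns this order bound into
  a norm bound \<open>\<parallel>g x\<^sub>2 - g x\<^sub>1\<parallel> \<le> (4M/m + 2M)/\<delta> \<cdot> \<parallel>x\<^sub>2 - x\<^sub>1\<parallel>\<close>.  For the theorem, \<open>\<delta>\<close> is
  chosen so that the closed \<open>\<delta>\<close>-thickening of \<open>K\<close> stays in \<open>U\<close>, and \<open>M\<close> bounds the
  continuous map \<open>f\<close> on the compact set \<open>[0, t] \<times> (thickening of K)\<close>.
\<close>

lemma closed_if_bounded_parts_compact:
  fixes S :: "'a::real_normed_vector set"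
  assumes "\<And>r. compact (S \<inter> cball 0 r)"
  shows "closed S"
proof -
  have "x \<in> S" if "x \<in> closure S" for x
  proof -
    have "norm y \<le> norm x + 1" if "dist x y < 1" for y
      using that norm_triangle_ineq2[of y x] by (simp add: dist_norm norm_minus_commute)
    then have "ball x 1 \<inter> S \<subseteq> S \<inter> cball 0 (norm x + 1)"
      by auto
    then have "closure (ball x 1 \<inter> S) \<subseteq> S \<inter> cball 0 (norm x + 1)"
      using assms compact_imp_closed closure_minimal by metis
    moreover have "x \<in> closure (ball x 1 \<inter> S)"
      using open_Int_closure_subset[OF open_ball, of x 1 S] that by auto
    ultimately show ?thesis by blast
  qed
  then show ?thesis using closure_subset_eq by blast
qed

text \<open>Induction step: if \<open>b\<close> is
  not in the (closed) span of \<open>B\<close>, its distance \<open>\<delta>\<close> to that span is positive, so every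
  \<open>x = y + t b\<close> with \<open>\<parallel>x\<parallel> \<le> r\<close> has \<open>|t| \<le> r/\<delta>\<close> and \<open>\<parallel>y\<parallel>\<close> bounded; hence the ball is a
  closed part of a continuous image of a compact product.\<close>
lemma compact_span_Int_cball:
  fixes B :: "'a::real_normed_vector set"
  assumes "finite B"
  shows "compact (span B \<inter> cball 0 r)"
  using assms
proof (induction B arbitrary: r rule: finite_induct)
  case empty
  have "span {} \<inter> cball (0::'a) r \<subseteq> {0}" by simp
  then show ?case by (meson finite.emptyI finite.insertI finite_imp_compact finite_subset)
next
  case (insert b B)
  show ?case
  proof (cases "b \<in> span B")
    case True
    then show ?thesis using insert.IH by (simp add: span_redundant)
  next
    case False
    have closed_span: "closed (span B)"
      using insert.IH by (rule closed_if_bounded_parts_compact)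
    define \<delta> where "\<delta> = infdist b (span B)"
    have \<delta>_pos: "\<delta> > 0"
      using False in_closed_iff_infdist_zero[OF closed_span] infdist_nonneg[of b "span B"]
      unfolding \<delta>_def by (metis empty_iff less_eq_real_def span_zero)
    have coeff_bound: "\<bar>t\<bar> * \<delta> \<le> norm x" if "x - t *\<^sub>R b \<in> span B" for x t
    proof (cases "t = 0")
      case False
      have "- (x - t *\<^sub>R b) /\<^sub>R t \<in> span B"
        by (intro span_scale span_neg that)
      then have "\<delta> \<le> dist b (- (x - t *\<^sub>R b) /\<^sub>R t)"
        unfolding \<delta>_def by (rule infdist_le)
      also have "\<dots> = norm x / \<bar>t\<bar>"
        using False by (simp add: dist_norm divide_simps algebra_simps flip: norm_scaleR)
      finally show ?thesis using False by (simp add: field_simps)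
    qed simp
    define R where "R = r + r / \<delta> * norm b"
    define P where "P = (\<lambda>p. fst p + snd p *\<^sub>R b) ` ((span B \<inter> cball 0 R) \<times> {-r/\<delta>..r/\<delta>})"
    have "compact P"
      unfolding P_def
      by (intro compact_continuous_image compact_Times insert.IH compact_Icc continuous_intros)
    have "span (insert b B) \<inter> cball 0 r = P \<inter> cball 0 r"
    proof
      show "P \<inter> cball 0 r \<subseteq> span (insert b B) \<inter> cball 0 r"
      proof -
        have "span B \<subseteq> span (insert b B)" "b \<in> span (insert b B)"
          by (simp_all add: span_mono subset_insertI span_base)
        then show ?thesis
          unfolding P_def by (auto intro!: span_add span_scale)
      qed
    next
      show "span (insert b B) \<inter> cball 0 r \<subseteq> P \<inter> cball 0 r"
      proof
        fix x assume x: "x \<in> span (insert b B) \<inter> cball 0 r"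
        then obtain t where y: "x - t *\<^sub>R b \<in> span B"
          by (auto simp: span_breakdown_eq)
        have nx: "norm x \<le> r" using x by simp
        have t_bound: "\<bar>t\<bar> \<le> r / \<delta>"
          using coeff_bound[OF y] nx \<delta>_pos by (simp add: field_simps)
        have "norm (x - t *\<^sub>R b) \<le> norm x + \<bar>t\<bar> * norm b"
          using norm_triangle_ineq4[of x "t *\<^sub>R b"] by simp
        also have "\<dots> \<le> R"
          unfolding R_def using nx t_bound by (intro add_mono mult_right_mono) auto
        finally have "(x - t *\<^sub>R b, t) \<in> (span B \<inter> cball 0 R) \<times> {-r/\<delta>..r/\<delta>}"
          using y t_bound by auto
        then show "x \<in> P \<inter> cball 0 r"
          unfolding P_def using x by (auto intro!: image_eqI[of _ _ "(x - t *\<^sub>R b, t)"])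
      qed
    qed
    then show ?thesis
      using \<open>compact P\<close> by (simp add: compact_Int_closed)
  qed
qed

lemma finite_dim_compact:
  fixes S B :: "'a::real_normed_vector set"
  assumes "finite B" "span B = UNIV" "bounded S" "closed S"
  shows "compact S"
proof -
  obtain r where "\<forall>x\<in>S. norm x \<le> r"
    using \<open>bounded S\<close> bounded_iff by blast
  then have "S = S \<inter> (span B \<inter> cball 0 r)"
    using \<open>span B = UNIV\<close> by auto
  then show ?thesis
    using closed_Int_compact[OF \<open>closed S\<close> compact_span_Int_cball[OF \<open>finite B\<close>]] by metis
qed

lemma finite_dim_compact_thickening:
  fixes K B :: "'a::real_normed_vector set"
  assumes "finite B" "span B = UNIV" "compact K"
  shows "compact (\<Union>x\<in>K. cball x \<delta>)"
proof -
  have "compact (cball (0::'a) \<delta>)"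
    using assms(1,2) by (rule finite_dim_compact) auto
  then have "compact (\<Union>x\<in>K. \<Union>y\<in>cball 0 \<delta>. {x + y})"
    using \<open>compact K\<close> by (intro compact_sums')
  moreover have "(\<Union>y\<in>cball 0 \<delta>. {x + y}) = cball x \<delta>" for x :: 'a
  proof -
    have "(\<Union>y\<in>cball 0 \<delta>. {x + y}) = (+) x ` cball 0 \<delta>"
      by blast
    then show ?thesis
      using cball_translation[of x 0 \<delta>] by simp
  qed
  ultimately show ?thesis by simp
qed

lemma proper_cone_opposite:
  assumes "proper_cone C" "c \<in> C" "- c \<in> C"
  shows "c = 0"
proof -
  have "c \<in> C \<inter> uminus ` C"
    using assms(2,3) by (auto intro: image_eqI[of _ _ "- c"])
  then show ?thesis
    using assms(1) unfolding proper_cone_def by blast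
qed

text \<open>The constant \<open>m\<close> is the
  minimum of \<open>infdist (-c) C\<close> over the compact set of unit vectors \<open>c \<in> C\<close>; it is positive
  because \<open>-c \<notin> C\<close> for such \<open>c\<close>, and rescaling by \<open>\<parallel>c\<parallel>\<close> gives the inequality.\<close>
lemma proper_cone_normal:
  fixes C B :: "'a::real_normed_vector set"
  assumes "finite B" "span B = UNIV" "closed C" "proper_cone C"
  obtains m where "m > 0" "\<And>c d. c \<in> C \<Longrightarrow> d \<in> C \<Longrightarrow> m * norm c \<le> norm (c + d)"
proof (cases "C \<subseteq> {0}")
  case True
  then show ?thesis using that[of 1] by fastforce
next
  case False
  have scale: "k *\<^sub>R c \<in> C" if "c \<in> C" "k > 0" for c k
    using assms(4) that unfolding proper_cone_def pos_cone_def by blast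
  define S where "S = C \<inter> sphere 0 1"
  have "compact S"
    unfolding S_def
  proof (rule finite_dim_compact[OF assms(1,2)])
    show "bounded (C \<inter> sphere 0 1)"
      by (rule bounded_subset[OF bounded_cball[of 0 1]]) auto
    have "sphere (0::'a) 1 = cball 0 1 - ball 0 1"
      by auto
    then show "closed (C \<inter> sphere 0 1)"
      using assms(3) by (simp add: closed_Int closed_Diff)
  qed
  have unit: "c /\<^sub>R norm c \<in> S" if "c \<in> C" "c \<noteq> 0" for c
    unfolding S_def using that scale[OF that(1), of "inverse (norm c)"] by auto
  then have "S \<noteq> {}" using False by blast
  have "continuous_on S (\<lambda>c. infdist (- c) C)"
    by (intro continuous_intros)
  then obtain c0 where "c0 \<in> S" and c0_min: "\<And>c. c \<in> S \<Longrightarrow> infdist (- c0) C \<le> infdist (- c) C"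
    using continuous_attains_inf[OF \<open>compact S\<close> \<open>S \<noteq> {}\<close>] by blast
  define m where "m = infdist (- c0) C"
  have "C \<noteq> {}" using False by blast
  have "- c0 \<notin> C"
    using \<open>c0 \<in> S\<close> proper_cone_opposite[OF assms(4)] unfolding S_def by force
  then have "m > 0"
    unfolding m_def using in_closed_iff_infdist_zero[OF assms(3) \<open>C \<noteq> {}\<close>] infdist_nonneg
    by (metis less_eq_real_def)
  moreover have "m * norm c \<le> norm (c + d)" if "c \<in> C" "d \<in> C" for c d
  proof (cases "c = 0")
    case False
    have "m \<le> infdist (- (c /\<^sub>R norm c)) C"
      unfolding m_def using c0_min unit[OF that(1) False] .
    also have "\<dots> \<le> dist (- (c /\<^sub>R norm c)) (d /\<^sub>R norm c)"
      using scale[OF that(2), of "inverse (norm c)"] False by (intro infdist_le) auto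
    also have "\<dots> = norm (- ((c + d) /\<^sub>R norm c))"
      by (simp add: dist_norm scaleR_add_right)
    also have "\<dots> = norm (c + d) / norm c"
      by (simp add: divide_inverse_commute)
    finally show ?thesis
      using False by (simp add: field_simps)
  qed simp
  ultimately show ?thesis by (rule that)
qed

lemma normal_cone_sandwich:
  fixes C :: "'a::real_normed_vector set"
  assumes "m > 0" "\<And>c d. c \<in> C \<Longrightarrow> d \<in> C \<Longrightarrow> m * norm c \<le> norm (c + d)"
    and "v + a \<in> C" "b - v \<in> C"
  shows "norm v \<le> (norm a + norm b) / m + norm a"
proof -
  have "m * norm (v + a) \<le> norm (a + b)"
    using assms(2)[OF assms(3,4)] by (simp add: algebra_simps)
  also have "\<dots> \<le> norm a + norm b" by (rule norm_triangle_ineq)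
  finally have "norm (v + a) \<le> (norm a + norm b) / m"
    using \<open>m > 0\<close> by (simp add: field_simps)
  moreover have "norm v \<le> norm (v + a) + norm a"
    using norm_triangle_ineq4[of "v + a" a] by simp
  ultimately show ?thesis by linarith
qed

lemma cone_convex_chord:
  assumes "cone_convex_on C U g" "x \<in> U" "y \<in> U" "0 \<le> l" "l \<le> 1"
  shows "l *\<^sub>R (g x - g y) - (g (l *\<^sub>R x + (1 - l) *\<^sub>R y) - g y) \<in> C"
proof -
  have "l *\<^sub>R g x + (1 - l) *\<^sub>R g y - g (l *\<^sub>R x + (1 - l) *\<^sub>R y) \<in> C"
    using assms unfolding cone_convex_on_def cone_le_def by blast
  then show ?thesis by (simp add: algebra_simps)
qed

text \<open>With \<open>u\<close> the vector of length \<open>\<delta>\<close> pointing from \<open>x\<^sub>1\<close> to \<open>x\<^sub>2\<close>, both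
  \<open>x\<^sub>2\<close> and \<open>x\<^sub>1\<close> are convex combinations (with weight \<open>l = d/(d + \<delta>)\<close>, \<open>d = \<parallel>x\<^sub>2 - x\<^sub>1\<parallel>\<close>)
  of the other point and of \<open>x\<^sub>2 + u\<close> resp. \<open>x\<^sub>1 - u\<close>; the two chord inequalities bound
  \<open>g x\<^sub>2 - g x\<^sub>1\<close> from above and below, and the sandwich lemma finishes.\<close>
lemma cone_convex_lipschitz_estimate:
  fixes C :: "'b::real_normed_vector set" and g :: "'a::real_normed_vector \<Rightarrow> 'b"
  assumes "m > 0" "\<And>c d. c \<in> C \<Longrightarrow> d \<in> C \<Longrightarrow> m * norm c \<le> norm (c + d)"
    and g_convex: "cone_convex_on C U g" and "\<delta> > 0"
    and balls: "cball x1 \<delta> \<subseteq> U" "cball x2 \<delta> \<subseteq> U"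
    and bound: "\<And>y. y \<in> cball x1 \<delta> \<union> cball x2 \<delta> \<Longrightarrow> norm (g y) \<le> M"
  shows "norm (g x2 - g x1) \<le> (4 * M / m + 2 * M) / \<delta> * norm (x2 - x1)"
proof (cases "x1 = x2")
  case False
  define d where "d = norm (x2 - x1)"
  define u where "u = (\<delta> / d) *\<^sub>R (x2 - x1)"
  define l where "l = d / (d + \<delta>)"
  have "d > 0" unfolding d_def using False by simp
  have "norm u = \<delta>" unfolding u_def using \<open>d > 0\<close> \<open>\<delta> > 0\<close> d_def by simp
  then have near: "x2 + u \<in> cball x2 \<delta>" "x1 - u \<in> cball x1 \<delta>"
    by (simp_all add: dist_norm)
  have "x1 \<in> U" "x2 \<in> U" "x2 + u \<in> U" "x1 - u \<in> U"
    using balls near \<open>\<delta> > 0\<close> by auto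
  have "0 \<le> l" "l \<le> 1" unfolding l_def using \<open>d > 0\<close> \<open>\<delta> > 0\<close> by auto
  have lu: "l *\<^sub>R u = (1 - l) *\<^sub>R (x2 - x1)"
    unfolding l_def u_def using \<open>d > 0\<close> \<open>\<delta> > 0\<close> by (simp add: field_simps)
  have "l *\<^sub>R (x2 + u) + (1 - l) *\<^sub>R x1 = x2" "l *\<^sub>R (x1 - u) + (1 - l) *\<^sub>R x2 = x1"
    using lu by (simp_all add: algebra_simps)
  then have
    "l *\<^sub>R (g (x2 + u) - g x1) - (g x2 - g x1) \<in> C"
    "l *\<^sub>R (g (x1 - u) - g x2) - (g x1 - g x2) \<in> C"
    using cone_convex_chord[OF g_convex _ _ \<open>0 \<le> l\<close> \<open>l \<le> 1\<close>] \<open>x1 \<in> U\<close> \<open>x2 \<in> U\<close>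
      \<open>x2 + u \<in> U\<close> \<open>x1 - u \<in> U\<close> by metis+
  then have "norm (g x2 - g x1)
      \<le> (norm (l *\<^sub>R (g (x1 - u) - g x2)) + norm (l *\<^sub>R (g (x2 + u) - g x1))) / m
        + norm (l *\<^sub>R (g (x1 - u) - g x2))"
    by (intro normal_cone_sandwich[OF assms(1,2)]) (simp_all add: algebra_simps)
  also have "\<dots> \<le> (l * (2 * M) + l * (2 * M)) / m + l * (2 * M)"
  proof -
    have bound_points: "norm (g y) \<le> M" if "y \<in> {x1, x2, x1 - u, x2 + u}" for y
      by (rule bound) (use that near \<open>\<delta> > 0\<close> in auto)
    have "norm (g y - g z) \<le> 2 * M" if "y \<in> {x1 - u, x2 + u}" "z \<in> {x1, x2}" for y z
    proof -
      have "norm (g y) \<le> M" "norm (g z) \<le> M"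
        using that bound_points by auto
      then show ?thesis
        using norm_triangle_ineq4[of "g y" "g z"] by linarith
    qed
    then show ?thesis
      using \<open>0 \<le> l\<close> \<open>m > 0\<close>
      by (intro add_mono divide_right_mono) (auto intro: mult_left_mono)
  qed
  also have "\<dots> = l * (4 * M / m + 2 * M)" by (simp add: field_simps)
  also have "\<dots> \<le> d / \<delta> * (4 * M / m + 2 * M)"
  proof (rule mult_right_mono)
    show "l \<le> d / \<delta>" unfolding l_def using \<open>d > 0\<close> \<open>\<delta> > 0\<close> by (simp add: frac_le)
    have "norm (g x1) \<le> M" using \<open>\<delta> > 0\<close> by (intro bound) simp
    then have "0 \<le> M" by (rule order_trans[OF norm_ge_zero])
    then show "0 \<le> 4 * M / m + 2 * M" using \<open>m > 0\<close> by simp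
  qed
  finally show ?thesis
    unfolding d_def by (simp add: field_simps)
qed simp

lemma continuous_bounded_on_slab:
  fixes f :: "real \<Rightarrow> 'a::topological_space \<Rightarrow> 'b::real_normed_vector"
  assumes "continuous_on D (\<lambda>(\<tau>, x). f \<tau> x)" "{a..b} \<times> K \<subseteq> D" "compact K"
  obtains M where "\<And>\<tau> y. \<tau> \<in> {a..b} \<Longrightarrow> y \<in> K \<Longrightarrow> norm (f \<tau> y) \<le> M"
proof -
  have "compact ((\<lambda>(\<tau>, y). f \<tau> y) ` ({a..b} \<times> K))"
    by (intro compact_continuous_image continuous_on_subset[OF assms(1,2)] compact_Times
        compact_Icc assms(3))
  then obtain M where "\<forall>q\<in>(\<lambda>(\<tau>, y). f \<tau> y) ` ({a..b} \<times> K). norm q \<le> M"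
    using compact_imp_bounded bounded_iff by metis
  then show ?thesis
    by (intro that[of M]) force
qed

theorem mainTheorem2:
  fixes C :: "'a::real_normed_vector set"
    and T :: ereal
    and U :: "'a set"
    and f :: "real \<Rightarrow> 'a \<Rightarrow> 'a"
  assumes fin_dim: "\<exists>B::'a set. finite B \<and> span B = UNIV"
    and C_closed: "closed C"
    and C_proper: "proper_cone C"
    and T_pos: "0 < T"
    and U_ne: "U \<noteq> {}"
    and U_convex: "convex U"
    and U_open: "open U"
    and f_cont: "continuous_on ({t. 0 \<le> t \<and> ereal t < T} \<times> U) (\<lambda>(t, x). f t x)"
    and f_convex: "\<And>t. 0 \<le> t \<Longrightarrow> ereal t < T \<Longrightarrow> cone_convex_on C U (f t)"
  shows "\<forall>K t. compact K \<and> K \<subseteq> U \<and> 0 \<le> t \<and> ereal t < T \<longrightarrow>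
           bdd_above {norm (f \<tau> x2 - f \<tau> x1) / norm (x2 - x1) | \<tau> x1 x2.
                        0 \<le> \<tau> \<and> \<tau> \<le> t \<and> x1 \<in> K \<and> x2 \<in> K \<and> x1 \<noteq> x2}"
proof (intro allI impI, elim conjE)
  fix K t assume K: "compact K" "K \<subseteq> U" and t: "0 \<le> t" "ereal t < T"
  obtain B :: "'a set" where B: "finite B" "span B = UNIV"
    using fin_dim by blast
  obtain m where m: "m > 0" "\<And>c d. c \<in> C \<Longrightarrow> d \<in> C \<Longrightarrow> m * norm c \<le> norm (c + d)"
    using proper_cone_normal[OF B C_closed C_proper] by blast
  obtain \<delta> where "\<delta> > 0" and thick_U: "(\<Union>x\<in>K. cball x \<delta>) \<subseteq> U"
    using compact_subset_open_imp_cball_epsilon_subset[OF K(1) U_open K(2)] by blast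
  have before_T: "ereal \<tau> < T" if "\<tau> \<le> t" for \<tau>
    using that t(2) by (meson ereal_less_eq(3) order_le_less_trans)
  have "{0..t} \<times> (\<Union>x\<in>K. cball x \<delta>) \<subseteq> {t. 0 \<le> t \<and> ereal t < T} \<times> U"
    using thick_U before_T by auto
  then obtain M
    where M: "\<And>\<tau> y. \<tau> \<in> {0..t} \<Longrightarrow> y \<in> (\<Union>x\<in>K. cball x \<delta>) \<Longrightarrow> norm (f \<tau> y) \<le> M"
    using continuous_bounded_on_slab[OF f_cont _ finite_dim_compact_thickening[OF B K(1)]] by blast
  have lipschitz: "norm (f \<tau> x2 - f \<tau> x1) \<le> (4 * M / m + 2 * M) / \<delta> * norm (x2 - x1)"
    if \<tau>: "0 \<le> \<tau>" "\<tau> \<le> t" and x: "x1 \<in> K" "x2 \<in> K" for \<tau> x1 x2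
  proof (rule cone_convex_lipschitz_estimate[OF m f_convex[OF \<tau>(1) before_T[OF \<tau>(2)]] \<open>\<delta> > 0\<close>])
    show "cball x1 \<delta> \<subseteq> U" "cball x2 \<delta> \<subseteq> U"
      using thick_U x by blast+
    show "norm (f \<tau> y) \<le> M" if "y \<in> cball x1 \<delta> \<union> cball x2 \<delta>" for y
      using M[of \<tau> y] \<tau> x that by auto
  qed
  show "bdd_above {norm (f \<tau> x2 - f \<tau> x1) / norm (x2 - x1) | \<tau> x1 x2.
                     0 \<le> \<tau> \<and> \<tau> \<le> t \<and> x1 \<in> K \<and> x2 \<in> K \<and> x1 \<noteq> x2}"
  proof (rule bdd_aboveI[where M = "(4 * M / m + 2 * M) / \<delta>"], elim CollectE exE conjE)
    fix r \<tau> x1 x2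
    assume "r = norm (f \<tau> x2 - f \<tau> x1) / norm (x2 - x1)"
      and "0 \<le> \<tau>" "\<tau> \<le> t" "x1 \<in> K" "x2 \<in> K" "x1 \<noteq> x2"
    then show "r \<le> (4 * M / m + 2 * M) / \<delta>"
      using lipschitz[of \<tau> x1 x2] by (simp add: divide_le_eq)
  qed
qed

end
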